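(* Let $\mathbf{f}=(\mathbf{f}_0,\dots,\mathbf{f}_{k-1})$ be uniform in $\mathcal{F}(n,k)$ (assumed nonempty), let $\mathbf{u}$ be a node chosen uniformly among all $n$ nodes of $\mathbf{f}$, let $\mathbf{i}$ be the index of the tree containing $\mathbf{u}$, and let $R_{\mathbf{u}}(\mathbf{f})=((\mathbf{f}_{\mathbf{i}},\mathbf{u}),\mathbf{f}_{\mathbf{i}+1\bmod k},\dots,\mathbf{f}_{\mathbf{i}+k-1\bmod k})$. Then $R_{\mathbf{u}}(\mathbf{f})$ is uniformly distributed on $\mathcal{F}^\bullet(n,k)$. Consequently, the decreasingly sorted tree-size vector of a uniform element of $\mathcal{F}(n,k)$ has the same distribution as that of a uniform element of $\mathcal{F}^\bullet(n,k)$.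
   Context: $\mathcal{F}(n,k)$ is the set of sequences $(f_0,\dots,f_{k-1})$ of $k$ rooted plane complete binary trees (every node has $0$ or $2$ ordered children) with $n$ nodes in total. $\mathcal{F}^\bullet(n,k)$ is the set of $((f_0,v),f_1,\dots,f_{k-1})$ with $(f_0,\dots,f_{k-1})\in\mathcal{F}(n,k)$ and $v$ a node of $f_0$. The tree-size vector of a forest is $(|f_0|,\dots,|f_{k-1}|)$, $|f_i|$ being the number of nodes of $f_i$. *)

theory Defs
  imports "HOL-Probability.Probability_Mass_Function"
begin

datatype cbtree = Leaf | Node cbtree cbtree

fun tsize :: "cbtree \<Rightarrow> nat" where
  "tsize Leaf = 1"
| "tsize (Node l r) = 1 + tsize l + tsize r"

fun tnodes :: "cbtree \<Rightarrow> bool list set" where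
  "tnodes Leaf = {[]}"
| "tnodes (Node l r) = insert [] ((Cons False) ` tnodes l \<union> (Cons True) ` tnodes r)"

definition forests :: "nat \<Rightarrow> nat \<Rightarrow> cbtree list set" where
  "forests n k = {f. length f = k \<and> (\<Sum>t\<leftarrow>f. tsize t) = n}"

text \<open>Fbullet(n,k): ((f0,v), [f1,...,f(k-1)]) with (f0,...,f(k-1)) in F(n,k) and v a node of f0.\<close>
definition pforests :: "nat \<Rightarrow> nat \<Rightarrow> ((cbtree \<times> bool list) \<times> cbtree list) set" where
  "pforests n k = {((t, v), ts). t # ts \<in> forests n k \<and> v \<in> tnodes t}"

definition fnodes :: "cbtree list \<Rightarrow> (nat \<times> bool list) set" where
  "fnodes f = {(i, v). i < length f \<and> v \<in> tnodes (f ! i)}"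

definition rotate_at :: "nat \<times> bool list \<Rightarrow> cbtree list \<Rightarrow> (cbtree \<times> bool list) \<times> cbtree list" where
  "rotate_at u f = (let i = fst u; k = length f in
     ((f ! i, snd u), map (\<lambda>j. f ! ((i + j) mod k)) [1..<k]))"

definition sorted_sizes :: "cbtree list \<Rightarrow> nat list" where
  "sorted_sizes f = rev (sort (map tsize f))"

definition psorted_sizes :: "(cbtree \<times> bool list) \<times> cbtree list \<Rightarrow> nat list" where
  "psorted_sizes p = sorted_sizes (fst (fst p) # snd p)"

end

theory Submission imports Defs begin

(* Record with a node u of f also the index i of the tree containing it. Then
   (f, u) \<mapsto> (R_u(f), i) is a bijection from the pointed forests onto F\<bullet>(n,k) \<times> {0..<k},
   since f is recovered from R_u(f) by rotating back by i. Every forest in F(n,k) has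
   exactly n nodes, so a uniform forest with a uniform node is a uniform pointed forest;
   its image is uniform on F\<bullet>(n,k) \<times> {0..<k}, whose first marginal is uniform on F\<bullet>(n,k).
   The tree-size vector of R_u(f) is a rotation of that of f, which gives the second claim. *)

lemma pmf_of_set_Times:
  assumes "finite A" "A \<noteq> {}" "finite B" "B \<noteq> {}"
  shows "pmf_of_set (A \<times> B) = pair_pmf (pmf_of_set A) (pmf_of_set B)"
  by (rule pmf_eqI) (auto simp: assms pmf_pair card_cartesian_product indicator_def)

lemma pmf_of_set_Sigma:
  assumes "finite A" "A \<noteq> {}"
    and "\<And>a. a \<in> A \<Longrightarrow> finite (B a)" "\<And>a. a \<in> A \<Longrightarrow> card (B a) = m" "0 < m"
  shows "pmf_of_set (Sigma A B) = bind_pmf (pmf_of_set A) (\<lambda>a. map_pmf (Pair a) (pmf_of_set (B a)))"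
proof -
  have nonempty: "B a \<noteq> {}" if "a \<in> A" for a
    using assms(4,5) that by fastforce
  have "Sigma A B = (\<Union>a\<in>A. Pair a ` B a)"
    by auto
  also have "pmf_of_set \<dots> = bind_pmf (pmf_of_set A) (\<lambda>a. pmf_of_set (Pair a ` B a))"
    by (rule pmf_of_set_UN[where n = m])
      (auto simp: assms nonempty card_image inj_on_def disjoint_family_on_def)
  also have "\<dots> = bind_pmf (pmf_of_set A) (\<lambda>a. map_pmf (Pair a) (pmf_of_set (B a)))"
    by (intro bind_pmf_cong refl map_pmf_of_set_inj[symmetric]) (auto simp: assms nonempty inj_on_def)
  finally show ?thesis .
qed

lemma mset_rotate: "mset (rotate m xs) = mset xs"
proof -
  let ?j = "m mod length xs"
  have "mset (drop ?j xs @ take ?j xs) = mset (take ?j xs @ drop ?j xs)"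
    by (simp only: mset_append add.commute)
  then show ?thesis
    by (simp only: rotate_drop_take append_take_drop_id)
qed

lemma sum_list_rotate: "sum_list (rotate m xs) = sum_list (xs :: 'a::comm_monoid_add list)"
proof -
  have "sum_mset (mset (rotate m xs)) = sum_mset (mset xs)"
    by (simp only: mset_rotate)
  then show ?thesis
    by (simp only: sum_mset_sum_list)
qed

lemma rotate_rotate_complement:
  assumes "length xs = k" "i \<le> k"
  shows "rotate (k - i) (rotate i xs) = xs" and "rotate i (rotate (k - i) xs) = xs"
  using assms by (simp_all add: rotate_rotate)

lemma finite_tnodes: "finite (tnodes t)"
  by (induction t) auto

lemma card_tnodes: "card (tnodes t) = tsize t"
proof (induction t)
  case (Node l r)
  have "Cons False ` tnodes l \<inter> Cons True ` tnodes r = {}"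
    and "[] \<notin> Cons False ` tnodes l \<union> Cons True ` tnodes r"
    by auto
  with Node show ?case
    by (simp add: card_insert_if card_Un_disjoint card_image finite_tnodes)
qed simp

lemma tsize_neq_0 [simp]: "tsize t \<noteq> 0"
  by (cases t) auto

lemma finite_tsize_le: "finite {t. tsize t \<le> m}"
proof (induction m)
  case (Suc m)
  let ?A = "{t. tsize t \<le> m}"
  have "{t. tsize t \<le> Suc m} \<subseteq> insert Leaf (case_prod Node ` (?A \<times> ?A))"
  proof
    fix t assume "t \<in> {t. tsize t \<le> Suc m}"
    then show "t \<in> insert Leaf (case_prod Node ` (?A \<times> ?A))"
      by (cases t) auto
  qed
  with Suc.IH show ?case
    by (meson finite_SigmaI finite_imageI finite_insert finite_subset)
qed simp

lemma finite_forests: "finite (forests n k)"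
proof (rule finite_subset)
  show "forests n k \<subseteq> {f. set f \<subseteq> {t. tsize t \<le> n} \<and> length f = k}"
    by (auto simp: forests_def member_le_sum_list)
  show "finite {f. set f \<subseteq> {t. tsize t \<le> n} \<and> length f = k}"
    by (rule finite_lists_length_eq[OF finite_tsize_le])
qed

lemma rotate_in_forests_iff: "rotate m f \<in> forests n k \<longleftrightarrow> f \<in> forests n k"
  by (simp add: forests_def rotate_map[symmetric] sum_list_rotate)

lemma length_forests: "f \<in> forests n k \<Longrightarrow> length f = k"
  by (simp add: forests_def)

lemma fnodes_Sigma: "fnodes f = (SIGMA i:{..<length f}. tnodes (f ! i))"
  by (auto simp: fnodes_def)

lemma finite_fnodes: "finite (fnodes f)"
  by (simp add: fnodes_Sigma finite_tnodes)

lemma card_fnodes: "card (fnodes f) = (\<Sum>t\<leftarrow>f. tsize t)"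
  by (simp add: fnodes_Sigma finite_tnodes card_tnodes sum_list_sum_nth atLeast0LessThan)

lemma card_fnodes_forests: "f \<in> forests n k \<Longrightarrow> card (fnodes f) = n"
  by (simp add: card_fnodes forests_def)

lemma fnodes_forests_nonempty: "f \<in> forests n k \<Longrightarrow> 0 < n \<Longrightarrow> fnodes f \<noteq> {}"
  using card_fnodes_forests by fastforce

lemma nth_Cons_tl_rotate:
  assumes "i < length xs"
  shows "xs ! i # tl (rotate i xs) = rotate i xs"
proof -
  have "xs \<noteq> []"
    using assms by auto
  then show ?thesis
    using assms hd_rotate_conv_nth[of xs i] by (cases "rotate i xs") auto
qed

lemma rotate_at_conv_rotate:
  assumes "i < length f"
  shows "rotate_at (i, v) f = ((f ! i, v), tl (rotate i f))"
proof -
  let ?k = "length f"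
  have "rotate i f = map (\<lambda>j. f ! ((i + j) mod ?k)) [0..<?k]"
    by (rule nth_equalityI) (simp_all add: nth_rotate)
  also have "[0..<?k] = 0 # [1..<?k]"
    using assms by (subst upt_rec) auto
  finally show ?thesis
    using assms by (simp add: rotate_at_def Let_def)
qed

lemma bij_betw_rotate_at:
  "bij_betw (\<lambda>(f, u). (rotate_at u f, fst u))
     (SIGMA f:forests n k. fnodes f) (pforests n k \<times> {..<k})"
  by (rule bij_betw_byWitness[where f' = "\<lambda>(((t, v), ts), i). (rotate (k - i) (t # ts), (i, v))"];
      safe)
    (auto simp: fnodes_def pforests_def length_forests rotate_at_conv_rotate nth_Cons_tl_rotate
      rotate_rotate_complement nth_rotate rotate_in_forests_iff dest: length_forests)

lemma bind_pmf_rotate_at_forests: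
  assumes "forests n k \<noteq> {}" "0 < n"
  shows "bind_pmf (pmf_of_set (forests n k)) (\<lambda>f. map_pmf (\<lambda>u. rotate_at u f) (pmf_of_set (fnodes f)))
    = pmf_of_set (pforests n k)"
proof -
  let ?F = "forests n k" and ?P = "pforests n k"
  let ?S = "SIGMA f:?F. fnodes f" and ?R = "\<lambda>(f, u). (rotate_at u f, fst u)"
  have F: "finite ?F" "?F \<noteq> {}" and "0 < k"
    using assms finite_forests by (auto simp: forests_def)
  have S: "finite ?S" "?S \<noteq> {}"
    using F fnodes_forests_nonempty[OF _ assms(2)] by (auto simp: finite_fnodes)
  have uniform_pointed: "pmf_of_set ?S = bind_pmf (pmf_of_set ?F) (\<lambda>f. map_pmf (Pair f) (pmf_of_set (fnodes f)))"
    using F finite_fnodes card_fnodes_forests assms(2) by (rule pmf_of_set_Sigma)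
  have image: "map_pmf ?R (pmf_of_set ?S) = pmf_of_set (?P \<times> {..<k})"
    using bij_betw_rotate_at S(2,1) by (rule map_pmf_of_set_bij_betw)
  have "?P \<times> {..<k} = ?R ` ?S"
    using bij_betw_rotate_at by (rule bij_betw_imp_surj_on[symmetric])
  then have P: "finite ?P" "?P \<noteq> {}"
    using S \<open>0 < k\<close> finite_cartesian_productD1[of ?P "{..<k}"] by auto
  have "bind_pmf (pmf_of_set ?F) (\<lambda>f. map_pmf (\<lambda>u. rotate_at u f) (pmf_of_set (fnodes f)))
      = map_pmf fst (map_pmf ?R (pmf_of_set ?S))"
    by (simp add: uniform_pointed map_bind_pmf map_pmf_comp)
  also have "\<dots> = pmf_of_set ?P"
    using \<open>0 < k\<close> by (simp add: image pmf_of_set_Times[OF P] map_fst_pair_pmf lessThan_empty_iff)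
  finally show ?thesis .
qed

lemma sorted_sizes_rotate: "sorted_sizes (rotate m f) = sorted_sizes f"
  unfolding sorted_sizes_def rotate_map[symmetric] sorted_list_of_multiset_mset[symmetric] mset_rotate ..

lemma psorted_sizes_rotate_at:
  assumes "i < length f"
  shows "psorted_sizes (rotate_at (i, v) f) = sorted_sizes f"
  using assms by (simp add: psorted_sizes_def rotate_at_conv_rotate nth_Cons_tl_rotate sorted_sizes_rotate)

lemma map_pmf_psorted_sizes_rerooted:
  assumes "\<And>f. f \<in> set_pmf M \<Longrightarrow> fnodes f \<noteq> {}"
  shows "map_pmf psorted_sizes (bind_pmf M (\<lambda>f. map_pmf (\<lambda>u. rotate_at u f) (pmf_of_set (fnodes f))))
    = map_pmf sorted_sizes M"
proof -
  have "map_pmf psorted_sizes (bind_pmf M (\<lambda>f. map_pmf (\<lambda>u. rotate_at u f) (pmf_of_set (fnodes f))))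
      = bind_pmf M (\<lambda>f. map_pmf (\<lambda>u. psorted_sizes (rotate_at u f)) (pmf_of_set (fnodes f)))"
    by (simp add: map_bind_pmf map_pmf_comp)
  also have "\<dots> = bind_pmf M (\<lambda>f. return_pmf (sorted_sizes f))"
  proof (intro bind_pmf_cong refl)
    fix f assume "f \<in> set_pmf M"
    then have "psorted_sizes (rotate_at u f) = sorted_sizes f" if "u \<in> set_pmf (pmf_of_set (fnodes f))" for u
      using that assms finite_fnodes[of f] by (auto simp: fnodes_def psorted_sizes_rotate_at)
    then show "map_pmf (\<lambda>u. psorted_sizes (rotate_at u f)) (pmf_of_set (fnodes f)) = return_pmf (sorted_sizes f)"
      by (simp add: map_pmf_const cong: map_pmf_cong)
  qed
  also have "\<dots> = map_pmf sorted_sizes M"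
    by (simp add: map_pmf_def)
  finally show ?thesis .
qed

theorem mainTheorem13:
  fixes n k :: nat
  assumes "forests n k \<noteq> {}" and "n \<ge> 1"
  shows "bind_pmf (pmf_of_set (forests n k))
           (\<lambda>f. map_pmf (\<lambda>u. rotate_at u f) (pmf_of_set (fnodes f)))
         = pmf_of_set (pforests n k)
         \<and> map_pmf sorted_sizes (pmf_of_set (forests n k))
         = map_pmf psorted_sizes (pmf_of_set (pforests n k))"
proof -
  have "0 < n"
    using assms(2) by simp
  with assms(1) have rerooted: "bind_pmf (pmf_of_set (forests n k))
      (\<lambda>f. map_pmf (\<lambda>u. rotate_at u f) (pmf_of_set (fnodes f))) = pmf_of_set (pforests n k)"
    by (rule bind_pmf_rotate_at_forests)
  have "set_pmf (pmf_of_set (forests n k)) = forests n k"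
    using assms(1) finite_forests by simp
  then have "map_pmf psorted_sizes (pmf_of_set (pforests n k)) = map_pmf sorted_sizes (pmf_of_set (forests n k))"
    unfolding rerooted[symmetric] using \<open>0 < n\<close> fnodes_forests_nonempty
    by (intro map_pmf_psorted_sizes_rerooted) auto
  with rerooted show ?thesis
    by simp
qed

end
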